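(* Let $(b,c)$ be a weighted graph over $V$ and $m$ a measure on $V$. The following are equivalent: (i) for every $\alpha>0$ there is a nontrivial, nonnegative, bounded function $l$ on $V$ with $(\widetilde L+\alpha)l\le0$; (ii) for some $\alpha>0$ there is a nontrivial, nonnegative, bounded function $l$ on $V$ with $(\widetilde L+\alpha)l\le0$.
   Context: Let $V$ be a countably infinite set. A weighted graph over $V$ is a pair $(b,c)$ of maps $b:V\times V\to[0,\infty)$ and $c:V\to[0,\infty)$ with $b(x,x)=0$, $b(x,y)=b(y,x)$ and $\sum_{y\in V}b(x,y)<\infty$ for all $x,y\in V$. A measure on $V$ is a map $m:V\to(0,\infty)$. For $u$ with $\sum_y b(x,y)|u(y)|<\infty$ for all $x$ (in particular bounded $u$), $\widetilde Lu(x)=\frac1{m(x)}\sum_y b(x,y)(u(x)-u(y))+\frac{c(x)}{m(x)}u(x)$. *)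

theory Defs
  imports "HOL-Analysis.Analysis"
begin

text \<open>A weighted graph over the vertex type 'v (the vertex set V is UNIV :: 'v set).\<close>
definition weighted_graph :: "('v \<Rightarrow> 'v \<Rightarrow> real) \<Rightarrow> ('v \<Rightarrow> real) \<Rightarrow> bool" where
  "weighted_graph b c \<longleftrightarrow>
     (\<forall>x y. b x y \<ge> 0) \<and> (\<forall>x. c x \<ge> 0) \<and> (\<forall>x. b x x = 0) \<and>
     (\<forall>x y. b x y = b y x) \<and> (\<forall>x. (\<lambda>y. b x y) summable_on UNIV)"

definition is_measure :: "('v \<Rightarrow> real) \<Rightarrow> bool" where
  "is_measure m \<longleftrightarrow> (\<forall>x. m x > 0)"

text \<open>The formal operator L-tilde (applied to functions u with
  sum_y b(x,y)|u(y)| finite, in particular bounded u).\<close>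
definition Ltilde :: "('v \<Rightarrow> 'v \<Rightarrow> real) \<Rightarrow> ('v \<Rightarrow> real) \<Rightarrow> ('v \<Rightarrow> real)
                      \<Rightarrow> ('v \<Rightarrow> real) \<Rightarrow> 'v \<Rightarrow> real" where
  "Ltilde b c m u x = (1 / m x) * (\<Sum>\<^sub>\<infinity>y. b x y * (u x - u y)) + c x / m x * u x"

end

theory Submission
  imports Defs
begin

(* Call a nontrivial, nonnegative, bounded l with (Ltilde + a) l <= 0
   an a-subsolution.  The implication (i) ==> (ii) is trivial, and an
   a-subsolution is also an a'-subsolution for every a' <= a.  For (ii) ==> (i)
   it therefore suffices to raise the constant a arbitrarily, which is done by
   squaring: the discrete chain-rule inequality
       Ltilde (l^2) x <= 2 l(x) * Ltilde l x,
   valid because l(x)^2 - l(y)^2 <= 2 l(x) (l(x) - l(y)) and c >= 0, shows that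
   l^2 is a (2a)-subsolution whenever l is an a-subsolution.  Iterating gives
   (2^n a)-subsolutions for all n, and 2^n a exceeds any given alpha. *)

definition subsolution ::
  "('v \<Rightarrow> 'v \<Rightarrow> real) \<Rightarrow> ('v \<Rightarrow> real) \<Rightarrow> ('v \<Rightarrow> real) \<Rightarrow> real \<Rightarrow> ('v \<Rightarrow> real) \<Rightarrow> bool"
  where "subsolution b c m a l \<longleftrightarrow> l \<noteq> (\<lambda>_. 0) \<and> (\<forall>x. l x \<ge> 0) \<and> bounded (range l) \<and>
             (\<forall>x. Ltilde b c m l x + a * l x \<le> 0)"

(* For bounded u the sum defining Ltilde u converges absolutely, being dominated
   by 2B times the summable edge weights; needed to manipulate the infinite sums. *)
lemma summable_weighted_difference:
  fixes b :: "'v \<Rightarrow> 'v \<Rightarrow> real" and u :: "'v \<Rightarrow> real"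
  assumes wg: "weighted_graph b c" and bound: "\<And>y. \<bar>u y\<bar> \<le> B"
  shows "(\<lambda>y. b x y * (u x - u y)) summable_on UNIV"
proof -
  have weights: "(\<lambda>y. b x y) summable_on UNIV" and nonneg: "\<And>y. b x y \<ge> 0"
    using wg unfolding weighted_graph_def by blast+
  have dominant: "(\<lambda>y. b x y * (2*B)) summable_on UNIV"
    using weights by (rule summable_on_cmult_left)
  have "norm (b x y * (u x - u y)) \<le> b x y * (2*B)" for y
  proof -
    have "\<bar>u x - u y\<bar> \<le> 2*B" using bound[of x] bound[of y] by linarith
    then show ?thesis using nonneg[of y] by (simp add: abs_mult mult_left_mono)
  qed
  then have "(\<lambda>y. norm (b x y * (u x - u y))) summable_on UNIV"
    by (rule Infinite_Sum.abs_summable_on_comparison_test'[OF dominant])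
  then show ?thesis by (rule abs_summable_summable)
qed

lemma Ltilde_square_le:
  fixes u :: "'v \<Rightarrow> real"
  assumes wg: "weighted_graph b c" and mm: "is_measure m" and bnd: "bounded (range u)"
  shows "Ltilde b c m (\<lambda>y. (u y)^2) x \<le> 2 * u x * Ltilde b c m u x"
proof -
  obtain B where B: "\<And>y. \<bar>u y\<bar> \<le> B" using bnd unfolding bounded_iff by auto
  have B2: "\<bar>(u y)^2\<bar> \<le> B^2" for y
    using B by (metis abs_ge_zero abs_power2 power2_abs power_mono)
  have bpos: "\<And>y. b x y \<ge> 0" and cpos: "c x \<ge> 0"
    using wg unfolding weighted_graph_def by auto
  have mpos: "m x > 0" using mm unfolding is_measure_def by auto
  define S where "S = (\<Sum>\<^sub>\<infinity>y. b x y * (u x - u y))"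
  define S2 where "S2 = (\<Sum>\<^sub>\<infinity>y. b x y * ((u x)^2 - (u y)^2))"
  have sum1: "(\<lambda>y. b x y * (u x - u y)) summable_on UNIV"
    by (rule summable_weighted_difference[OF wg B])
  have "S2 \<le> (\<Sum>\<^sub>\<infinity>y. 2 * u x * (b x y * (u x - u y)))"
    unfolding S2_def
  proof (rule infsum_mono)
    show "(\<lambda>y. b x y * ((u x)^2 - (u y)^2)) summable_on UNIV"
      by (rule summable_weighted_difference[OF wg B2])
    show "(\<lambda>y. 2 * u x * (b x y * (u x - u y))) summable_on UNIV"
      using sum1 by (rule summable_on_cmult_right)
    fix y
    (* u(x)^2 - u(y)^2 = 2 u(x) (u(x) - u(y)) - (u(x) - u(y))^2 *)
    have "(u x)^2 - (u y)^2 \<le> 2 * u x * (u x - u y)"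
      using zero_le_power2[of "u x - u y"] by (simp add: power2_eq_square algebra_simps)
    then show "b x y * ((u x)^2 - (u y)^2) \<le> 2 * u x * (b x y * (u x - u y))"
      using bpos[of y] by (metis mult.left_commute mult_left_mono)
  qed
  also have "\<dots> = 2 * u x * S" unfolding S_def by (rule infsum_cmult_right')
  finally have "S2 \<le> 2 * u x * S" .
  moreover have "c x * (u x)^2 \<le> 2 * c x * (u x)^2" using cpos by simp
  ultimately have "(S2 + c x * (u x)^2) / m x \<le> (2 * u x * S + 2 * c x * (u x)^2) / m x"
    using mpos by (intro divide_right_mono) auto
  then show ?thesis
    unfolding Ltilde_def S_def[symmetric] S2_def[symmetric]
    using mpos by (simp add: field_simps power2_eq_square)
qed

lemma subsolution_square:
  assumes wg: "weighted_graph b c" and mm: "is_measure m" and sub: "subsolution b c m a l"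
  shows "subsolution b c m (2*a) (\<lambda>x. (l x)^2)"
proof -
  have nontrivial: "l \<noteq> (\<lambda>_. 0)" and nonneg: "\<And>x. l x \<ge> 0" and bnd: "bounded (range l)"
    and ineq: "\<And>x. Ltilde b c m l x + a * l x \<le> 0"
    using sub unfolding subsolution_def by auto
  have "(\<lambda>x. (l x)^2) \<noteq> (\<lambda>_. 0)"
    using nontrivial by (metis power_zero_numeral zero_eq_power2)
  moreover have "bounded (range (\<lambda>x. (l x)^2))"
  proof -
    obtain B where "\<And>y. \<bar>l y\<bar> \<le> B" using bnd unfolding bounded_iff by auto
    then have "\<And>y. \<bar>(l y)^2\<bar> \<le> B^2"
      by (metis abs_ge_zero abs_power2 power2_abs power_mono)
    then show ?thesis unfolding bounded_iff by auto
  qed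
  moreover have "Ltilde b c m (\<lambda>x. (l x)^2) x + 2*a * (l x)^2 \<le> 0" for x
  proof -
    have "Ltilde b c m (\<lambda>x. (l x)^2) x + 2*a * (l x)^2
          \<le> 2 * l x * (Ltilde b c m l x + a * l x)"
      using Ltilde_square_le[OF wg mm bnd, of x] by (simp add: algebra_simps power2_eq_square)
    also have "\<dots> \<le> 0" using nonneg[of x] ineq[of x] by (simp add: mult_nonneg_nonpos)
    finally show ?thesis .
  qed
  ultimately show ?thesis unfolding subsolution_def using nonneg by auto
qed

lemma subsolution_double_power:
  assumes wg: "weighted_graph b c" and mm: "is_measure m" and sub: "subsolution b c m a l"
  shows "\<exists>l'. subsolution b c m (2^n * a) l'"
proof (induction n)
  case 0
  then show ?case using sub by auto
next
  case (Suc n)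
  then obtain l' where "subsolution b c m (2^n * a) l'" by auto
  then have "subsolution b c m (2 * (2^n * a)) (\<lambda>x. (l' x)^2)"
    by (rule subsolution_square[OF wg mm])
  then show ?case by (auto simp: mult.assoc)
qed

(* Since l >= 0, an a-subsolution is an a'-subsolution for every a' <= a. *)
lemma subsolution_mono:
  assumes "subsolution b c m a l" and "a' \<le> a"
  shows "subsolution b c m a' l"
proof -
  have "\<And>x. Ltilde b c m l x + a' * l x \<le> Ltilde b c m l x + a * l x"
    using assms unfolding subsolution_def by (simp add: mult_right_mono)
  then show ?thesis using assms unfolding subsolution_def by (meson order_trans)
qed

theorem mainTheorem17:
  fixes b :: "'v \<Rightarrow> 'v \<Rightarrow> real" and c m :: "'v \<Rightarrow> real"
  assumes "countable (UNIV :: 'v set)" and "infinite (UNIV :: 'v set)"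
    and "weighted_graph b c" and "is_measure m"
  shows "(\<forall>\<alpha>>0. \<exists>l :: 'v \<Rightarrow> real. l \<noteq> (\<lambda>_. 0) \<and> (\<forall>x. l x \<ge> 0) \<and> bounded (range l) \<and>
             (\<forall>x. Ltilde b c m l x + \<alpha> * l x \<le> 0))
     \<longleftrightarrow> (\<exists>\<alpha>>0. \<exists>l :: 'v \<Rightarrow> real. l \<noteq> (\<lambda>_. 0) \<and> (\<forall>x. l x \<ge> 0) \<and> bounded (range l) \<and>
             (\<forall>x. Ltilde b c m l x + \<alpha> * l x \<le> 0))"
  unfolding subsolution_def[symmetric]
proof
  assume "\<forall>\<alpha>>0. \<exists>l. subsolution b c m \<alpha> l"
  then show "\<exists>\<alpha>>0. \<exists>l. subsolution b c m \<alpha> l" by (meson zero_less_one)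
next
  assume "\<exists>\<alpha>>0. \<exists>l. subsolution b c m \<alpha> l"
  then obtain a l where a: "a > 0" and sub: "subsolution b c m a l" by blast
  show "\<forall>\<alpha>>0. \<exists>l. subsolution b c m \<alpha> l"
  proof (intro allI impI)
    fix \<alpha> :: real
    obtain n where "\<alpha> / a < 2^n" using real_arch_pow[of 2 "\<alpha> / a"] by auto
    then have le: "\<alpha> \<le> 2^n * a" using a by (simp add: field_simps)
    obtain l' where "subsolution b c m (2^n * a) l'"
      using subsolution_double_power[OF assms(3,4) sub] by blast
    then show "\<exists>l. subsolution b c m \<alpha> l" using le subsolution_mono by blast
  qed
qed

end
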